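(* Let $g_1,\dots,g_m\in\mathbb{R}[\mathbf{x}]$, $\mathbf{X}=\{\mathbf{x}\in\mathbb{R}^n:g_1(\mathbf{x})\ge0,\dots,g_m(\mathbf{x})\ge0\}$, and assume the quadratic module $\mathcal{M}(\mathfrak{g})$ is Archimedean. Let $f\in\mathbb{R}[\mathbf{x}]$ be positive on $\mathbf{X}$, let $\mathscr{A}=\operatorname{supp}(f)\cup\bigcup_{j=1}^m\operatorname{supp}(g_j)$, and let $\mathbf{R}$ be a binary matrix whose columns are the sign symmetries of $\mathscr{A}$. Then $f=\sigma_0+\sum_{j=1}^m\sigma_jg_j$ for some sums of squares polynomials $\sigma_0,\dots,\sigma_m$ such that $\mathbf{R}^\intercal\alpha\equiv\mathbf{0}\pmod 2$ for every $\alpha\in\operatorname{supp}(\sigma_j)$, $j=0,\dots,m$.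
   Context: $\mathcal{M}(\mathfrak{g})=\{\sum_{j=0}^m\sigma_jg_j:\sigma_j\text{ sums of squares of polynomials}\}$ with $g_0=1$; it is Archimedean if $N-\|\mathbf{x}\|_2^2\in\mathcal{M}(\mathfrak{g})$ for some $N>0$. The sign symmetries of a finite set $\mathscr{A}\subseteq\mathbb{N}^n$ are all vectors $\mathbf{s}\in\{0,1\}^n$ with $\mathbf{s}^\intercal\alpha\equiv0\pmod2$ for all $\alpha\in\mathscr{A}$. $\operatorname{supp}$ denotes the set of exponents of monomials with nonzero coefficient. *)

theory Defs
  imports Complex_Main "HOL-Library.Poly_Mapping"
begin

text \<open>Real multivariate polynomials in the variables indexed by the finite type 'v
  (so n = CARD('v)): maps from exponent vectors (monomials) to coefficients.\<close>
type_synonym 'v rpoly = "('v \<Rightarrow>\<^sub>0 nat) \<Rightarrow>\<^sub>0 real"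

definition meval :: "('v \<Rightarrow>\<^sub>0 nat) \<Rightarrow> ('v \<Rightarrow> real) \<Rightarrow> real" where
  "meval \<alpha> x = (\<Prod>i\<in>Poly_Mapping.keys \<alpha>. x i ^ Poly_Mapping.lookup \<alpha> i)"

definition peval :: "'v rpoly \<Rightarrow> ('v \<Rightarrow> real) \<Rightarrow> real" where
  "peval p x = (\<Sum>\<alpha>\<in>Poly_Mapping.keys p. Poly_Mapping.lookup p \<alpha> * meval \<alpha> x)"

definition pvar :: "'v \<Rightarrow> 'v rpoly" where
  "pvar i = Poly_Mapping.single (Poly_Mapping.single i 1) 1"

definition pconst :: "real \<Rightarrow> 'v rpoly" where
  "pconst c = Poly_Mapping.single 0 c"

definition supp :: "'v rpoly \<Rightarrow> ('v \<Rightarrow>\<^sub>0 nat) set" where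
  "supp p = Poly_Mapping.keys p"

definition is_sos :: "'v rpoly \<Rightarrow> bool" where
  "is_sos p \<longleftrightarrow> (\<exists>qs. p = (\<Sum>q\<leftarrow>qs. q * q))"

definition quad_module :: "nat \<Rightarrow> (nat \<Rightarrow> 'v rpoly) \<Rightarrow> 'v rpoly set" where
  "quad_module m g = {p. \<exists>\<sigma>. (\<forall>j\<le>m. is_sos (\<sigma> j)) \<and>
      p = \<sigma> 0 + (\<Sum>j=1..m. \<sigma> j * g j)}"

definition archimedean :: "nat \<Rightarrow> (nat \<Rightarrow> 'v::finite rpoly) \<Rightarrow> bool" where
  "archimedean m g \<longleftrightarrow> (\<exists>N>0. pconst N - (\<Sum>i\<in>UNIV. pvar i * pvar i) \<in> quad_module m g)"

definition sign_symmetries :: "('v::finite \<Rightarrow>\<^sub>0 nat) set \<Rightarrow> ('v \<Rightarrow> nat) set" where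
  "sign_symmetries A = {s. (\<forall>i. s i \<in> {0,1}) \<and>
      (\<forall>\<alpha>\<in>A. even (\<Sum>i\<in>UNIV. s i * Poly_Mapping.lookup \<alpha> i))}"

end

theory Submission
  imports Defs "HOL-Analysis.Analysis"
begin

text \<open>
  Putinar's Positivstellensatz is proved along the lines of Jacobi and Prestel. In the preordering
  \<open>T\<close> generated by the ball polynomial \<open>N - |x|\<^sup>2\<close>, which is Archimedean, every \<open>G\<close> that is
  positive on the ball satisfies \<open>G t = 1 + t'\<close> with \<open>t, t' \<in> T\<close>: otherwise \<open>T - G T\<close> extends by
  Zorn's lemma to a maximal proper preordering \<open>P\<close>, which is total and Archimedean, so that
  \<open>a \<mapsto> sup {r. a - r \<in> P}\<close> is a ring homomorphism to the reals, i.e. evaluation at a point of the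
  ball where \<open>G \<le> 0\<close>. The Kadison--Dubois iteration then puts \<open>G\<close> itself into \<open>T\<close>. To pass from
  the ball to the quadratic module, subtract \<open>\<Sum>\<^sub>j c (1 - c g\<^sub>j)\<^bsup>2k\<^esup> g\<^sub>j\<close> from \<open>f\<close>: for large \<open>k\<close>
  the result is positive on the whole ball, and \<open>N - |x|\<^sup>2\<close> itself lies in the quadratic module.

  For a sign symmetry \<open>s\<close> the substitution \<open>x\<^sub>i \<mapsto> (-1)\<^bsup>s\<^sub>i\<^esup> x\<^sub>i\<close> fixes \<open>f\<close> and every \<open>g\<^sub>j\<close> and
  maps sums of squares to sums of squares. Averaging a representation over the finite group of
  sign symmetries gives another one whose multipliers only contain exponents \<open>\<alpha>\<close> fixed by the
  whole group, because a nontrivial character \<open>s \<mapsto> (-1)\<^bsup>s\<cdot>\<alpha>\<^esup>\<close> of the group sums to zero.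
\<close>

section \<open>Evaluation of polynomials\<close>

lemma poly_mapping_sum_single:
  "(p :: 'a \<Rightarrow>\<^sub>0 'b::comm_monoid_add) =
     (\<Sum>\<alpha>\<in>Poly_Mapping.keys p. Poly_Mapping.single \<alpha> (Poly_Mapping.lookup p \<alpha>))"
proof (rule poly_mapping_eqI)
  fix k
  show "Poly_Mapping.lookup p k =
      Poly_Mapping.lookup (\<Sum>\<alpha>\<in>Poly_Mapping.keys p. Poly_Mapping.single \<alpha> (Poly_Mapping.lookup p \<alpha>)) k"
    by (cases "k \<in> Poly_Mapping.keys p") (simp_all add: lookup_sum lookup_single when_def in_keys_iff)
qed

lemma poly_mapping_mult_homI:
  fixes \<Phi> :: "('a::comm_monoid_add \<Rightarrow>\<^sub>0 'b::comm_semiring_0) \<Rightarrow> 'c::comm_semiring_0"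
  assumes add: "\<And>p q. \<Phi> (p + q) = \<Phi> p + \<Phi> q" and zero: "\<Phi> 0 = 0"
    and single: "\<And>a b x y. \<Phi> (Poly_Mapping.single a x * Poly_Mapping.single b y) =
                             \<Phi> (Poly_Mapping.single a x) * \<Phi> (Poly_Mapping.single b y)"
  shows "\<Phi> (p * q) = \<Phi> p * \<Phi> q"
proof -
  have sum: "\<Phi> (sum h S) = (\<Sum>x\<in>S. \<Phi> (h x))" for h :: "'d \<Rightarrow> _" and S
    by (induction S rule: infinite_finite_induct) (auto simp: zero add)
  let ?sp = "\<lambda>\<alpha>. Poly_Mapping.single \<alpha> (Poly_Mapping.lookup p \<alpha>)"
  let ?sq = "\<lambda>\<beta>. Poly_Mapping.single \<beta> (Poly_Mapping.lookup q \<beta>)"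
  have "\<Phi> (p * q) = \<Phi> ((\<Sum>\<alpha>\<in>Poly_Mapping.keys p. ?sp \<alpha>) * (\<Sum>\<beta>\<in>Poly_Mapping.keys q. ?sq \<beta>))"
    by (simp flip: poly_mapping_sum_single)
  also have "\<dots> = (\<Sum>\<alpha>\<in>Poly_Mapping.keys p. \<Phi> (?sp \<alpha>)) * (\<Sum>\<beta>\<in>Poly_Mapping.keys q. \<Phi> (?sq \<beta>))"
    by (simp add: sum_product sum single)
  also have "\<dots> = \<Phi> p * \<Phi> q"
    by (simp flip: sum poly_mapping_sum_single)
  finally show ?thesis .
qed

lemma meval_UNIV: "meval \<alpha> (x :: 'v::finite \<Rightarrow> real) = (\<Prod>i\<in>UNIV. x i ^ Poly_Mapping.lookup \<alpha> i)"
  unfolding meval_def by (intro prod.mono_neutral_left) (auto simp: in_keys_iff)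

lemma meval_add: "meval (\<alpha> + \<beta>) (x :: 'v::finite \<Rightarrow> real) = meval \<alpha> x * meval \<beta> x"
  by (simp add: meval_UNIV lookup_add power_add prod.distrib)

lemma meval_zero [simp]: "meval 0 x = 1"
  by (simp add: meval_def)

lemma peval_keys_superset:
  assumes "finite S" "Poly_Mapping.keys p \<subseteq> S"
  shows "peval p x = (\<Sum>\<alpha>\<in>S. Poly_Mapping.lookup p \<alpha> * meval \<alpha> x)"
  unfolding peval_def using assms by (intro sum.mono_neutral_left) (auto simp: in_keys_iff)

lemma peval_add: "peval (p + q) x = peval p x + peval q x"
proof -
  let ?S = "Poly_Mapping.keys p \<union> Poly_Mapping.keys q"
  have "Poly_Mapping.keys (p + q) \<subseteq> ?S" by (rule keys_add)
  then show ?thesis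
    by (subst (1 2 3) peval_keys_superset[of ?S]) (auto simp: lookup_add algebra_simps sum.distrib)
qed

lemma peval_zero [simp]: "peval 0 x = 0"
  by (simp add: peval_def)

lemma peval_single [simp]: "peval (Poly_Mapping.single \<alpha> c) x = c * meval \<alpha> x"
  by (cases "c = 0") (simp_all add: peval_def)

lemma peval_mult: "peval (p * q) (x :: 'v::finite \<Rightarrow> real) = peval p x * peval q x"
  by (rule poly_mapping_mult_homI[where \<Phi> = "\<lambda>p. peval p x"])
    (simp_all add: peval_add mult_single meval_add)

lemma peval_uminus: "peval (- p) x = - peval p x"
  using peval_add[of p "- p" x] by simp

lemma peval_diff: "peval (p - q) x = peval p x - peval q x"
  using peval_add[of p "- q" x] peval_uminus[of q x] by simp

lemma peval_sum: "peval (sum h S) x = (\<Sum>i\<in>S. peval (h i) x)"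
  by (induction S rule: infinite_finite_induct) (auto simp: peval_add)

lemma pconst_add: "pconst (a + b) = pconst a + pconst b"
  by (simp add: pconst_def single_add)

lemma pconst_mult: "pconst (a * b) = pconst a * pconst b"
  by (simp add: pconst_def mult_single)

lemma pconst_uminus: "pconst (- a) = - pconst a"
  by (simp add: pconst_def single_uminus)

lemma pconst_diff: "pconst (a - b) = pconst a - pconst b"
  by (simp add: pconst_def single_diff)

lemma pconst_0 [simp]: "pconst 0 = 0"
  by (simp add: pconst_def)

lemma pconst_1 [simp]: "pconst 1 = 1"
  by (simp add: pconst_def)

lemma pconst_of_nat: "pconst (of_nat n) = of_nat n"
  by (simp add: pconst_def)

lemma pconst_numeral: "pconst (numeral n) = numeral n"
  by (simp add: pconst_def)

lemma pconst_inverse_mult_cancel: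
  "c \<noteq> 0 \<Longrightarrow> pconst (1 / c) * (pconst c * p) = (p :: 'v rpoly)"
  by (simp add: mult.assoc [symmetric] flip: pconst_mult)

lemma peval_pconst [simp]: "peval (pconst c) x = c"
  by (simp add: pconst_def)

lemma peval_one [simp]: "peval 1 x = 1"
  by (metis peval_pconst pconst_1)

lemma peval_pvar [simp]: "peval (pvar i) (x :: 'v::finite \<Rightarrow> real) = x i"
  by (simp add: pvar_def meval_def)

lemma peval_power: "peval (p ^ n) (x :: 'v::finite \<Rightarrow> real) = peval p x ^ n"
  by (induction n) (simp_all add: peval_mult)

lemma lookup_pconst_mult: "Poly_Mapping.lookup (pconst c * p) \<alpha> = c * Poly_Mapping.lookup p \<alpha>"
  by (simp add: pconst_def flip: mult_map_scale_conv_mult) (simp add: map.rep_eq when_def)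

definition pmonom :: "('v::finite \<Rightarrow>\<^sub>0 nat) \<Rightarrow> 'v rpoly" where
  "pmonom \<alpha> = (\<Prod>i\<in>UNIV. pvar i ^ Poly_Mapping.lookup \<alpha> i)"

lemma single_eq_pconst_mult_pmonom:
  "Poly_Mapping.single \<alpha> c = pconst c * pmonom (\<alpha> :: 'v::finite \<Rightarrow>\<^sub>0 nat)"
proof -
  have pvar_power: "pvar i ^ k = Poly_Mapping.single (Poly_Mapping.single i k) 1" for i :: 'v and k
    by (induction k) (simp_all add: pvar_def mult_single flip: single_add)
  have prod_single: "(\<Prod>i\<in>S. Poly_Mapping.single (h i) (1::real)) = Poly_Mapping.single (sum h S) 1"
    for h :: "'v \<Rightarrow> 'v \<Rightarrow>\<^sub>0 nat" and S
    by (induction S rule: infinite_finite_induct) (simp_all add: mult_single)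
  have "(\<Sum>i\<in>UNIV. Poly_Mapping.single i (Poly_Mapping.lookup \<alpha> i)) = \<alpha>"
    by (rule poly_mapping_eqI) (simp add: lookup_sum lookup_single when_def)
  then show ?thesis
    by (simp add: pmonom_def pvar_power prod_single pconst_def mult_single)
qed

section \<open>Sums of squares\<close>

lemma is_sos_0 [simp]: "is_sos 0"
  unfolding is_sos_def by (rule exI[of _ "[]"]) simp

lemma is_sos_square [simp]: "is_sos (q * q)"
  unfolding is_sos_def by (rule exI[of _ "[q]"]) simp

lemma is_sos_1 [simp]: "is_sos 1"
  using is_sos_square[of 1] by simp

lemma is_sos_add:
  assumes "is_sos a" "is_sos b" shows "is_sos (a + b)"
proof -
  obtain qs rs where "a = (\<Sum>q\<leftarrow>qs. q * q)" "b = (\<Sum>r\<leftarrow>rs. r * r)"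
    using assms unfolding is_sos_def by blast
  then have "a + b = (\<Sum>q\<leftarrow>qs @ rs. q * q)" by simp
  then show ?thesis unfolding is_sos_def by blast
qed

lemma sum_list_squares_mult:
  fixes qs rs :: "'a::comm_ring_1 list"
  shows "(\<Sum>q\<leftarrow>qs. q * q) * (\<Sum>r\<leftarrow>rs. r * r) = (\<Sum>p\<leftarrow>[q * r. q \<leftarrow> qs, r \<leftarrow> rs]. p * p)"
proof (induction qs)
  case (Cons a qs)
  have "(\<Sum>r\<leftarrow>rs. (a * r) * (a * r)) = (\<Sum>r\<leftarrow>rs. (a * a) * (r * r))"
    by (intro arg_cong[where f = sum_list] map_cong) (simp_all add: mult_ac)
  also have "\<dots> = a * a * (\<Sum>r\<leftarrow>rs. r * r)"
    by (rule sum_list_const_mult)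
  finally show ?case
    using Cons by (simp add: distrib_right comp_def)
qed simp

lemma is_sos_mult:
  assumes "is_sos a" "is_sos b" shows "is_sos (a * b)"
proof -
  obtain qs rs where "a = (\<Sum>q\<leftarrow>qs. q * q)" "b = (\<Sum>r\<leftarrow>rs. r * r)"
    using assms unfolding is_sos_def by blast
  then have "a * b = (\<Sum>p\<leftarrow>[q * r. q \<leftarrow> qs, r \<leftarrow> rs]. p * p)"
    by (simp add: sum_list_squares_mult)
  then show ?thesis unfolding is_sos_def by blast
qed

lemma is_sos_sum: "(\<And>i. i \<in> S \<Longrightarrow> is_sos (h i)) \<Longrightarrow> is_sos (sum h S)"
  by (induction S rule: infinite_finite_induct) (auto simp: is_sos_add)

lemma is_sos_even_power: "is_sos (q ^ (2 * k))"
  by (metis is_sos_square mult_2 power_add)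

lemma is_sos_pconst:
  assumes "c \<ge> 0" shows "is_sos (pconst c)"
proof -
  have "pconst c = pconst (sqrt c) * pconst (sqrt c)"
    using assms by (simp flip: pconst_mult)
  then show ?thesis by (metis is_sos_square)
qed

lemma is_sos_pconst_mult: "c \<ge> 0 \<Longrightarrow> is_sos a \<Longrightarrow> is_sos (pconst c * a)"
  by (simp add: is_sos_mult is_sos_pconst)

lemma is_sos_ring_hom:
  assumes add: "\<And>p q. \<Phi> (p + q) = \<Phi> p + \<Phi> q" and zero: "\<Phi> 0 = 0"
    and mult: "\<And>p q. \<Phi> (p * q) = \<Phi> p * \<Phi> q"
    and "is_sos p"
  shows "is_sos (\<Phi> p)"
proof -
  obtain qs where p: "p = (\<Sum>q\<leftarrow>qs. q * q)"
    using \<open>is_sos p\<close> unfolding is_sos_def by blast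
  have "\<Phi> (\<Sum>q\<leftarrow>qs. q * q) = (\<Sum>q\<leftarrow>map \<Phi> qs. q * q)"
    by (induction qs) (simp_all add: add zero mult)
  then show ?thesis
    unfolding is_sos_def p by blast
qed

section \<open>Preorderings and their points\<close>

definition is_preordering :: "'v rpoly set \<Rightarrow> bool" where
  "is_preordering P \<longleftrightarrow> (\<forall>a\<in>P. \<forall>b\<in>P. a + b \<in> P \<and> a * b \<in> P) \<and> (\<forall>q. q * q \<in> P)"

lemma preordering_add: "is_preordering P \<Longrightarrow> a \<in> P \<Longrightarrow> b \<in> P \<Longrightarrow> a + b \<in> P"
  by (simp add: is_preordering_def)

lemma preordering_mult: "is_preordering P \<Longrightarrow> a \<in> P \<Longrightarrow> b \<in> P \<Longrightarrow> a * b \<in> P"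
  by (simp add: is_preordering_def)

lemma preordering_square: "is_preordering P \<Longrightarrow> q * q \<in> P"
  by (simp add: is_preordering_def)

lemma preordering_0: "is_preordering P \<Longrightarrow> 0 \<in> P"
  using preordering_square[of P 0] by simp

lemma preordering_1: "is_preordering P \<Longrightarrow> 1 \<in> P"
  using preordering_square[of P 1] by simp

lemma preordering_pconst:
  assumes "is_preordering P" "c \<ge> 0" shows "pconst c \<in> P"
proof -
  have "pconst c = pconst (sqrt c) * pconst (sqrt c)"
    using assms(2) by (simp flip: pconst_mult)
  then show ?thesis
    using preordering_square[OF assms(1)] by metis
qed

lemma preordering_pconst_mult: "is_preordering P \<Longrightarrow> c \<ge> 0 \<Longrightarrow> a \<in> P \<Longrightarrow> pconst c * a \<in> P"
  by (simp add: preordering_mult preordering_pconst)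

lemma preordering_add_pconst: "is_preordering P \<Longrightarrow> a \<in> P \<Longrightarrow> c \<ge> 0 \<Longrightarrow> a + pconst c \<in> P"
  by (simp add: preordering_add preordering_pconst)

lemma preordering_half:
  assumes "is_preordering P" "2 * a \<in> P" shows "a \<in> P"
  using preordering_pconst_mult[OF assms(1) _ assms(2), of "1 / 2"]
  by (simp add: pconst_inverse_mult_cancel flip: pconst_numeral)

lemma preordering_minus_pconst_mono:
  "is_preordering P \<Longrightarrow> pconst k - a \<in> P \<Longrightarrow> k \<le> k' \<Longrightarrow> pconst k' - a \<in> P"
  using preordering_add_pconst[of P "pconst k - a" "k' - k"] by (simp add: pconst_diff)

lemma preordering_pconst_neg_imp_minus_one:
  assumes "is_preordering P" "c < 0" "pconst c \<in> P" shows "- 1 \<in> P"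
proof -
  have "pconst (- 1 / c) * pconst c \<in> P"
    using assms by (intro preordering_pconst_mult) auto
  then show ?thesis
    using assms(2) by (simp add: pconst_uminus flip: pconst_mult)
qed

definition preordering_adjoin :: "'v rpoly set \<Rightarrow> 'v rpoly \<Rightarrow> 'v rpoly set" where
  "preordering_adjoin P b = {p + b * q | p q. p \<in> P \<and> q \<in> P}"

lemma preordering_preordering_adjoin:
  assumes P: "is_preordering P" shows "is_preordering (preordering_adjoin P b)"
  unfolding is_preordering_def
proof (intro conjI ballI allI)
  fix x y assume "x \<in> preordering_adjoin P b" "y \<in> preordering_adjoin P b"
  then obtain p1 q1 p2 q2 where x: "x = p1 + b * q1" and y: "y = p2 + b * q2"
    and ps: "p1 \<in> P" "q1 \<in> P" "p2 \<in> P" "q2 \<in> P"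
    unfolding preordering_adjoin_def by blast
  have "x + y = (p1 + p2) + b * (q1 + q2)"
    unfolding x y by (simp add: algebra_simps)
  then show "x + y \<in> preordering_adjoin P b"
    unfolding preordering_adjoin_def using ps P by (blast intro: preordering_add)
  have "x * y = (p1 * p2 + (b * b) * (q1 * q2)) + b * (p1 * q2 + q1 * p2)"
    unfolding x y by (simp add: algebra_simps)
  then show "x * y \<in> preordering_adjoin P b"
    unfolding preordering_adjoin_def using ps P
    by (blast intro: preordering_add preordering_mult preordering_square)
next
  fix q
  have "q * q = q * q + b * 0" by simp
  then show "q * q \<in> preordering_adjoin P b"
    unfolding preordering_adjoin_def using P by (blast intro: preordering_square preordering_0)
qed

lemma subset_preordering_adjoin:
  assumes "is_preordering P" shows "P \<subseteq> preordering_adjoin P b"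
proof
  fix p assume "p \<in> P"
  moreover have "p = p + b * 0" by simp
  ultimately show "p \<in> preordering_adjoin P b"
    unfolding preordering_adjoin_def using preordering_0[OF assms] by blast
qed

lemma mem_preordering_adjoin:
  assumes "is_preordering P" shows "b \<in> preordering_adjoin P b"
proof -
  have "b = 0 + b * 1" by simp
  then show ?thesis
    unfolding preordering_adjoin_def using preordering_0[OF assms] preordering_1[OF assms] by blast
qed

lemma maximal_proper_preordering_exists:
  assumes S: "is_preordering S" "- 1 \<notin> S"
  obtains P where "is_preordering P" "S \<subseteq> P" "- 1 \<notin> P"
    "\<And>Q. is_preordering Q \<Longrightarrow> - 1 \<notin> Q \<Longrightarrow> P \<subseteq> Q \<Longrightarrow> Q = P"
proof -
  define F where "F = {Q. is_preordering Q \<and> S \<subseteq> Q \<and> - 1 \<notin> Q}"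
  have "\<exists>U\<in>F. \<forall>X\<in>C. X \<subseteq> U" if C: "C \<in> chains F" for C
  proof (cases "C = {}")
    case True
    then show ?thesis using S unfolding F_def by blast
  next
    case False
    have CF: "C \<subseteq> F" using chainsD2[OF C] .
    have "is_preordering (\<Union>C)"
      unfolding is_preordering_def
    proof (intro conjI ballI allI)
      fix a b assume "a \<in> \<Union>C" "b \<in> \<Union>C"
      then obtain X Y where XY: "X \<in> C" "Y \<in> C" "a \<in> X" "b \<in> Y" by blast
      then obtain Z where Z: "Z \<in> C" "a \<in> Z" "b \<in> Z"
        using chainsD[OF C XY(1,2)] by blast
      then have "is_preordering Z" using CF unfolding F_def by blast
      then show "a + b \<in> \<Union>C" "a * b \<in> \<Union>C"
        using Z by (blast intro: preordering_add preordering_mult)+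
    next
      fix q
      obtain X where "X \<in> C" using False by blast
      then show "q * q \<in> \<Union>C" using CF unfolding F_def by (blast intro: preordering_square)
    qed
    then show ?thesis using False CF unfolding F_def by blast
  qed
  then obtain P where "P \<in> F" and max: "\<forall>X\<in>F. P \<subseteq> X \<longrightarrow> X = P"
    using Zorn_Lemma2[of F] by blast
  then have P: "is_preordering P" "S \<subseteq> P" "- 1 \<notin> P"
    unfolding F_def by auto
  show ?thesis
  proof (rule that[OF P])
    fix Q assume "is_preordering Q" "- 1 \<notin> Q" "P \<subseteq> Q"
    then show "Q = P" using max P(2) unfolding F_def by blast
  qed
qed

lemma maximal_proper_preordering_total:
  assumes P: "is_preordering P" "- 1 \<notin> P"
    and max: "\<And>Q. is_preordering Q \<Longrightarrow> - 1 \<notin> Q \<Longrightarrow> P \<subseteq> Q \<Longrightarrow> Q = P"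
  shows "a \<in> P \<or> - a \<in> P"
proof (rule ccontr)
  assume "\<not> (a \<in> P \<or> - a \<in> P)"
  have adjoin: "\<exists>p\<in>P. \<exists>q\<in>P. - 1 = p + b * q" if "b \<notin> P" for b
  proof (rule ccontr)
    assume "\<not> ?thesis"
    then have "- 1 \<notin> preordering_adjoin P b"
      unfolding preordering_adjoin_def by blast
    then have "preordering_adjoin P b = P"
      using max preordering_preordering_adjoin[OF P(1)] subset_preordering_adjoin[OF P(1)] by blast
    then show False
      using mem_preordering_adjoin[OF P(1), of b] that by simp
  qed
  obtain p1 q1 where p1q1: "p1 \<in> P" "q1 \<in> P" "- 1 = p1 + a * q1"
    using adjoin \<open>\<not> (a \<in> P \<or> - a \<in> P)\<close> by blast
  obtain p2 q2 where p2q2: "p2 \<in> P" "q2 \<in> P" "- 1 = p2 + (- a) * q2"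
    using adjoin \<open>\<not> (a \<in> P \<or> - a \<in> P)\<close> by blast
  have eq1: "a * q1 = - 1 - p1"
    using p1q1(3) by simp
  have "a * q2 = p2 - (p2 + (- a) * q2)"
    by simp
  then have eq2: "a * q2 = 1 + p2"
    unfolding p2q2(3)[symmetric] by simp
  have "- 1 = p1 + p2 + p1 * p2 + (a * a) * (q1 * q2)"
  proof -
    have "(a * a) * (q1 * q2) = (a * q1) * (a * q2)" by (simp add: mult_ac)
    then show ?thesis unfolding eq1 eq2 by (simp add: algebra_simps)
  qed
  also have "\<dots> \<in> P"
    using p1q1 p2q2 P(1) by (intro preordering_add preordering_mult preordering_square)
  finally show False using P(2) by simp
qed

lemma total_proper_preordering_exists:
  assumes "is_preordering S" "- 1 \<notin> S"
  obtains P where "is_preordering P" "S \<subseteq> P" "- 1 \<notin> P" "\<And>a. a \<in> P \<or> - a \<in> P"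
  using maximal_proper_preordering_exists[OF assms] maximal_proper_preordering_total by metis

locale archimedean_total_preordering =
  fixes P :: "'v::finite rpoly set"
  assumes preordering: "is_preordering P" and proper: "- 1 \<notin> P" and total: "a \<in> P \<or> - a \<in> P"
    and bounded: "\<exists>k. pconst k - a \<in> P"
begin

definition phi :: "'v rpoly \<Rightarrow> real" where
  "phi a = Sup {r. a - pconst r \<in> P}"

lemma pconst_neg_notin: "c < 0 \<Longrightarrow> pconst c \<notin> P"
  using preordering_pconst_neg_imp_minus_one[OF preordering] proper by blast

lemma lower_bounds_nonempty: "{r. a - pconst r \<in> P} \<noteq> {}"
proof -
  obtain k where "pconst k - (- a) \<in> P" using bounded by blast
  then have "a - pconst (- k) \<in> P" by (simp add: pconst_uminus add.commute)
  then show ?thesis by blast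
qed

lemma lower_bounds_bdd_above: "bdd_above {r. a - pconst r \<in> P}"
proof -
  obtain k where k: "pconst k - a \<in> P" using bounded by blast
  have "r \<le> k" if "a - pconst r \<in> P" for r
  proof (rule ccontr)
    assume "\<not> r \<le> k"
    have "(pconst k - a) + (a - pconst r) \<in> P"
      using k that preordering by (intro preordering_add)
    then show False
      using pconst_neg_notin[of "k - r"] \<open>\<not> r \<le> k\<close> by (simp add: pconst_diff)
  qed
  then show ?thesis unfolding bdd_above_def by blast
qed

lemma phi_upper: "a - pconst r \<in> P \<Longrightarrow> r \<le> phi a"
  unfolding phi_def by (rule cSup_upper[OF _ lower_bounds_bdd_above]) simp

lemma less_phi_imp_mem: "r < phi a \<Longrightarrow> a - pconst r \<in> P"
proof -
  assume "r < phi a"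
  then obtain r' where r': "a - pconst r' \<in> P" "r < r'"
    using less_cSup_iff[OF lower_bounds_nonempty lower_bounds_bdd_above] unfolding phi_def by auto
  have "(a - pconst r') + pconst (r' - r) \<in> P"
    using r' preordering by (intro preordering_add_pconst) auto
  then show ?thesis by (simp add: pconst_diff)
qed

lemma phi_less_imp_mem: "phi a < r \<Longrightarrow> pconst r - a \<in> P"
  using phi_upper[of a r] total[of "a - pconst r"] by force

lemma phi_nonneg: "a \<in> P \<Longrightarrow> phi a \<ge> 0"
  using phi_upper[of a 0] by simp

lemma phi_eqI:
  assumes lo: "\<And>r. r < c \<Longrightarrow> a - pconst r \<in> P" and hi: "\<And>r. c < r \<Longrightarrow> pconst r - a \<in> P"
  shows "phi a = c"
proof (rule antisym)
  show "c \<le> phi a"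
  proof (rule field_le_epsilon)
    fix e :: real assume "e > 0"
    then show "c \<le> phi a + e" using phi_upper[OF lo, of "c - e"] by simp
  qed
  show "phi a \<le> c"
  proof (rule ccontr)
    assume "\<not> phi a \<le> c"
    define r where "r = (phi a + c) / 2"
    have "(pconst r - a) + (a - pconst ((r + phi a) / 2)) \<in> P"
      using \<open>\<not> phi a \<le> c\<close> preordering
      by (intro preordering_add hi less_phi_imp_mem) (auto simp: r_def)
    then show False
      using pconst_neg_notin[of "r - (r + phi a) / 2"] \<open>\<not> phi a \<le> c\<close>
      by (simp add: pconst_diff r_def)
  qed
qed

lemma phi_pconst: "phi (pconst c) = c"
  using preordering by (intro phi_eqI) (simp_all add: preordering_pconst flip: pconst_diff)

lemma phi_add: "phi (a + b) = phi a + phi b"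
proof (rule phi_eqI)
  fix r assume "r < phi a + phi b"
  then have "(a - pconst (phi a - (phi a + phi b - r) / 2)) + (b - pconst (phi b - (phi a + phi b - r) / 2)) \<in> P"
    using preordering by (intro preordering_add less_phi_imp_mem) auto
  then show "a + b - pconst r \<in> P"
    by (simp add: algebra_simps flip: pconst_add pconst_diff)
next
  fix r assume "phi a + phi b < r"
  then have "(pconst (phi a + (r - phi a - phi b) / 2) - a) + (pconst (phi b + (r - phi a - phi b) / 2) - b) \<in> P"
    using preordering by (intro preordering_add phi_less_imp_mem) auto
  then show "pconst r - (a + b) \<in> P"
    by (simp add: algebra_simps flip: pconst_add pconst_diff)
qed

lemma phi_0: "phi 0 = 0"
  using phi_pconst[of 0] by simp

lemma phi_1: "phi 1 = 1"
  using phi_pconst[of 1] by simp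

lemma phi_uminus: "phi (- a) = - phi a"
  using phi_add[of a "- a"] phi_0 by simp

lemma phi_diff: "phi (a - b) = phi a - phi b"
  using phi_add[of a "- b"] phi_uminus[of b] by simp

lemma phi_pconst_mult_pos:
  assumes "c > 0" shows "phi (pconst c * a) = c * phi a"
proof (rule phi_eqI)
  fix r assume "r < c * phi a"
  then have "pconst c * (a - pconst (r / c)) \<in> P"
    using assms preordering by (intro preordering_pconst_mult less_phi_imp_mem) (auto simp: field_simps)
  then show "pconst c * a - pconst r \<in> P"
    using assms by (simp add: algebra_simps flip: pconst_mult)
next
  fix r assume "c * phi a < r"
  then have "pconst c * (pconst (r / c) - a) \<in> P"
    using assms preordering by (intro preordering_pconst_mult phi_less_imp_mem) (auto simp: field_simps)
  then show "pconst r - pconst c * a \<in> P"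
    using assms by (simp add: algebra_simps flip: pconst_mult)
qed

lemma phi_pconst_mult: "phi (pconst c * a) = c * phi a"
proof -
  consider "c > 0" | "c = 0" | "c < 0" by linarith
  then show ?thesis
  proof cases
    case 3
    have "pconst c * a = - (pconst (- c) * a)" by (simp add: pconst_uminus)
    then show ?thesis using phi_pconst_mult_pos[of "- c" a] 3 by (simp add: phi_uminus)
  qed (simp_all add: phi_pconst_mult_pos phi_0)
qed

lemma phi_eq_0_iff: "phi a = 0 \<longleftrightarrow> (\<forall>e>0. a + pconst e \<in> P \<and> pconst e - a \<in> P)"
proof
  assume "phi a = 0"
  then show "\<forall>e>0. a + pconst e \<in> P \<and> pconst e - a \<in> P"
    using less_phi_imp_mem[of "- _" a] phi_less_imp_mem[of a] by (simp add: pconst_uminus)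
next
  assume bounds: "\<forall>e>0. a + pconst e \<in> P \<and> pconst e - a \<in> P"
  show "phi a = 0"
    by (rule phi_eqI) (use bounds[rule_format, of "- _"] bounds in \<open>auto simp: pconst_uminus\<close>)
qed

lemma phi_mult_eq_0:
  assumes "phi a = 0" "phi b = 0" shows "phi (a * b) = 0"
  unfolding phi_eq_0_iff
proof (intro allI impI)
  fix r :: real assume "r > 0"
  define e where "e = sqrt r"
  have e: "pconst e * pconst e = pconst r" "e > 0"
    using \<open>r > 0\<close> by (simp_all add: e_def flip: pconst_mult)
  have ab: "a + pconst e \<in> P" "pconst e - a \<in> P" "b + pconst e \<in> P" "pconst e - b \<in> P"
    using assms e(2) unfolding phi_eq_0_iff by blast+
  have "2 * (a * b + pconst r) = (a + pconst e) * (b + pconst e) + (pconst e - a) * (pconst e - b)"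
    "2 * (pconst r - a * b) = (a + pconst e) * (pconst e - b) + (pconst e - a) * (b + pconst e)"
    unfolding e(1)[symmetric] by (simp_all add: algebra_simps)
  then have "2 * (a * b + pconst r) \<in> P" "2 * (pconst r - a * b) \<in> P"
    using ab preordering by (auto intro!: preordering_add preordering_mult)
  then show "a * b + pconst r \<in> P \<and> pconst r - a * b \<in> P"
    using preordering_half[OF preordering] by blast
qed

lemma phi_mult: "phi (a * b) = phi a * phi b"
proof -
  define a' where "a' = a - pconst (phi a)"
  define b' where "b' = b - pconst (phi b)"
  have a': "phi a' = 0" and b': "phi b' = 0"
    by (simp_all add: a'_def b'_def phi_diff phi_pconst)
  have "a * b = a' * b' + pconst (phi a) * b' + pconst (phi b) * a' + pconst (phi a * phi b)"
    by (simp add: a'_def b'_def algebra_simps pconst_mult)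
  then show ?thesis
    by (simp add: phi_add phi_mult_eq_0[OF a' b'] phi_pconst_mult a' b' phi_pconst)
qed

lemma phi_sum: "phi (sum h S) = (\<Sum>i\<in>S. phi (h i))"
  by (induction S rule: infinite_finite_induct) (simp_all add: phi_0 phi_add)

lemma phi_prod: "phi (prod h S) = (\<Prod>i\<in>S. phi (h i))"
  by (induction S rule: infinite_finite_induct) (simp_all add: phi_1 phi_mult)

lemma phi_power: "phi (a ^ n) = phi a ^ n"
  by (induction n) (simp_all add: phi_1 phi_mult)

lemma phi_eq_peval: "phi p = peval p (\<lambda>i. phi (pvar i))"
proof -
  have "phi p = phi (\<Sum>\<alpha>\<in>Poly_Mapping.keys p. Poly_Mapping.single \<alpha> (Poly_Mapping.lookup p \<alpha>))"
    by (simp flip: poly_mapping_sum_single)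
  also have "\<dots> = peval p (\<lambda>i. phi (pvar i))"
    by (simp add: phi_sum single_eq_pconst_mult_pmonom phi_pconst_mult pmonom_def phi_prod
        phi_power meval_UNIV peval_def)
  finally show ?thesis .
qed

end

section \<open>Positivstellensatz for Archimedean preorderings\<close>

definition archimedean_preordering :: "'v rpoly set \<Rightarrow> bool" where
  "archimedean_preordering T \<longleftrightarrow> is_preordering T \<and> (\<forall>a. \<exists>k. pconst k - a \<in> T)"

lemma archimedean_preordering_bound:
  assumes "archimedean_preordering T"
  obtains k where "k \<ge> c" "pconst k - a \<in> T"
proof -
  obtain k where "pconst k - a \<in> T"
    using assms unfolding archimedean_preordering_def by blast
  then show ?thesis
    using that[of "max k c"] preordering_minus_pconst_mono[of T k a "max k c"] assms
    unfolding archimedean_preordering_def by auto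
qed

lemma archimedean_preordering_unit:
  fixes T :: "'v::finite rpoly set"
  assumes T: "archimedean_preordering T" and "h \<in> T"
    and pos: "\<And>x. peval h x \<ge> 0 \<Longrightarrow> peval G x > 0"
  shows "\<exists>t\<in>T. \<exists>t'\<in>T. G * t = 1 + t'"
proof (rule ccontr)
  assume no_unit: "\<not> ?thesis"
  let ?S = "preordering_adjoin T (- G)"
  have T': "is_preordering T" using T unfolding archimedean_preordering_def by blast
  have "- 1 \<notin> ?S"
  proof
    assume "- 1 \<in> ?S"
    then obtain t' t where "t' \<in> T" "t \<in> T" "- 1 = t' + (- G) * t"
      unfolding preordering_adjoin_def by blast
    moreover from this(3) have "G * t = 1 + t'"
      by (simp add: algebra_simps)
    ultimately show False using no_unit by blast
  qed
  then obtain P where P: "is_preordering P" "?S \<subseteq> P" "- 1 \<notin> P" "\<And>a. a \<in> P \<or> - a \<in> P"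
    using total_proper_preordering_exists preordering_preordering_adjoin[OF T'] by metis
  have "T \<subseteq> P"
    using P(2) subset_preordering_adjoin[OF T'] by blast
  then interpret archimedean_total_preordering P
    using P T unfolding archimedean_preordering_def by unfold_locales blast+
  define x where "x = (\<lambda>i. phi (pvar i))"
  have "peval h x \<ge> 0"
    using phi_nonneg[of h] \<open>h \<in> T\<close> \<open>T \<subseteq> P\<close> phi_eq_peval[of h] unfolding x_def by auto
  moreover have "peval G x \<le> 0"
    using phi_nonneg[of "- G"] mem_preordering_adjoin[OF T'] P(2) phi_eq_peval[of G] phi_uminus[of G]
    unfolding x_def by auto
  ultimately show False
    using pos[of x] by simp
qed

lemma preordering_unit_lower_bound:
  assumes T: "is_preordering T" and "t \<in> T" "t' \<in> T" and unit: "G * t = 1 + t'"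
    and K: "K > 0" "pconst K - G \<in> T"
  shows "t - pconst (1 / K) \<in> T"
proof -
  have "pconst (1 / K) * ((pconst K - G) * t + t') \<in> T"
    using K assms T by (intro preordering_pconst_mult preordering_add preordering_mult) auto
  also have "pconst (1 / K) * ((pconst K - G) * t + t') = t - pconst (1 / K)"
    using K(1) unit by (simp add: algebra_simps flip: pconst_mult)
  finally show ?thesis .
qed

text \<open>The contraction step of the Kadison--Dubois argument.\<close>
lemma preordering_add_pconst_contract:
  assumes T: "is_preordering T" and "t' \<in> T" and unit: "G * t = 1 + t'"
    and k: "k > 0" "pconst k - t \<in> T" and K: "K > 0" "t - pconst (1 / K) \<in> T"
    and c: "c \<ge> 0" "G + pconst c \<in> T"
  shows "G + pconst (c * (1 - 1 / (k * K))) \<in> T"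
proof -
  have "1 + t' + (pconst k - t) * (G + pconst c) + pconst c * (t - pconst (1 / K)) \<in> T"
    using preordering_add[OF T preordering_add[OF T preordering_add[OF T preordering_1[OF T] \<open>t' \<in> T\<close>]
        preordering_mult[OF T k(2) c(2)]] preordering_pconst_mult[OF T c(1) K(2)]] .
  also have "1 + t' + (pconst k - t) * (G + pconst c) + pconst c * (t - pconst (1 / K)) =
      pconst k * G + (pconst (k * c) - pconst (c / K)) + (1 + t' - G * t)"
    by (simp add: algebra_simps flip: pconst_mult)
  also have "\<dots> = pconst k * (G + pconst (c * (1 - 1 / (k * K))))"
    using k(1) by (simp add: unit distrib_left field_simps flip: pconst_mult pconst_diff)
  finally have "pconst (1 / k) * (pconst k * (G + pconst (c * (1 - 1 / (k * K))))) \<in> T"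
    by (rule preordering_pconst_mult[OF T, rotated]) (use k(1) in simp)
  then show ?thesis
    by (subst (asm) pconst_inverse_mult_cancel) (use k(1) in auto)
qed

lemma archimedean_preordering_add_pconst:
  assumes T: "archimedean_preordering T" and "t \<in> T" "t' \<in> T" and unit: "G * t = 1 + t'"
    and "\<delta> > 0"
  shows "G + pconst \<delta> \<in> T"
proof -
  have T': "is_preordering T" using T unfolding archimedean_preordering_def by blast
  obtain k where k: "k \<ge> 1" "pconst k - t \<in> T"
    using archimedean_preordering_bound[OF T] by blast
  obtain K where K: "K \<ge> 1" "pconst K - G \<in> T"
    using archimedean_preordering_bound[OF T] by blast
  obtain c where c: "c \<ge> 0" "pconst c - (- G) \<in> T"
    using archimedean_preordering_bound[OF T] by blast
  have tK: "t - pconst (1 / K) \<in> T"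
    using preordering_unit_lower_bound[OF T' assms(2,3) unit] K by simp
  define q where "q = 1 - 1 / (k * K)"
  have q: "0 \<le> q" "q < 1"
    using k(1) K(1) mult_mono[of 1 k 1 K] by (auto simp: q_def field_simps)
  have iter: "G + pconst (c * q ^ n) \<in> T" for n
  proof (induction n)
    case 0
    then show ?case using c by (simp add: add.commute)
  next
    case (Suc n)
    then show ?case
      using preordering_add_pconst_contract[OF T' \<open>t' \<in> T\<close> unit _ k(2) _ tK, of "c * q ^ n"] k K c q
      by (simp add: q_def mult_ac)
  qed
  obtain n where n: "q ^ n < \<delta> / (c + 1)"
    using real_arch_pow_inv[of "\<delta> / (c + 1)" q] q \<open>\<delta> > 0\<close> c by auto
  have "c * q ^ n \<le> (c + 1) * q ^ n"
    using q by (simp add: algebra_simps)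
  also have "\<dots> < \<delta>"
    using n c by (simp add: field_simps)
  finally have "(G + pconst (c * q ^ n)) + pconst (\<delta> - c * q ^ n) \<in> T"
    by (intro preordering_add_pconst[OF T' iter]) simp
  then show ?thesis
    by (simp add: pconst_diff)
qed

lemma archimedean_preordering_positivstellensatz:
  fixes T :: "'v::finite rpoly set"
  assumes T: "archimedean_preordering T" and "h \<in> T" and "\<delta> > 0"
    and pos: "\<And>x. peval h x \<ge> 0 \<Longrightarrow> peval F x > \<delta>"
  shows "F \<in> T"
proof -
  obtain t t' where "t \<in> T" "t' \<in> T" "(F - pconst \<delta>) * t = 1 + t'"
    using archimedean_preordering_unit[OF T \<open>h \<in> T\<close>, of "F - pconst \<delta>"] pos
    by (auto simp: peval_diff)
  then show ?thesis
    using archimedean_preordering_add_pconst[OF T] \<open>\<delta> > 0\<close> by fastforce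
qed

lemma preordering_bounded_mult:
  assumes T: "is_preordering T"
    and a: "pconst k - a \<in> T" "pconst k + a \<in> T" and b: "pconst l - b \<in> T" "pconst l + b \<in> T"
  shows "pconst (k * l) - a * b \<in> T" "pconst (k * l) + a * b \<in> T"
proof -
  have "2 * (pconst (k * l) - a * b) = (pconst k - a) * (pconst l + b) + (pconst k + a) * (pconst l - b)"
    "2 * (pconst (k * l) + a * b) = (pconst k + a) * (pconst l + b) + (pconst k - a) * (pconst l - b)"
    by (simp_all add: algebra_simps pconst_mult)
  then have "2 * (pconst (k * l) - a * b) \<in> T" "2 * (pconst (k * l) + a * b) \<in> T"
    using a b T by (auto intro!: preordering_add preordering_mult)
  then show "pconst (k * l) - a * b \<in> T" "pconst (k * l) + a * b \<in> T"
    using preordering_half[OF T] by blast+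
qed

lemma archimedean_preorderingI:
  fixes T :: "'v::finite rpoly set"
  assumes T: "is_preordering T" and vars: "\<And>i. \<exists>k. pconst k - pvar i \<in> T \<and> pconst k + pvar i \<in> T"
  shows "archimedean_preordering T"
proof -
  define B where "B = {a. \<exists>k. pconst k - a \<in> T \<and> pconst k + a \<in> T}"
  have const: "pconst c \<in> B" for c
    using T unfolding B_def
    by (intro CollectI exI[of _ "\<bar>c\<bar>"]) (simp add: preordering_pconst flip: pconst_diff pconst_add)
  have add: "a + b \<in> B" if ab: "a \<in> B" "b \<in> B" for a b
  proof -
    obtain k l where "pconst k - a \<in> T" "pconst k + a \<in> T" "pconst l - b \<in> T" "pconst l + b \<in> T"
      using ab unfolding B_def by blast
    moreover have "pconst (k + l) - (a + b) = (pconst k - a) + (pconst l - b)"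
      "pconst (k + l) + (a + b) = (pconst k + a) + (pconst l + b)"
      by (simp_all add: pconst_add algebra_simps)
    ultimately show ?thesis
      unfolding B_def using preordering_add[OF T] by (metis (mono_tags, lifting) mem_Collect_eq)
  qed
  have mult: "a * b \<in> B" if "a \<in> B" "b \<in> B" for a b
    using that preordering_bounded_mult[OF T] unfolding B_def by blast
  have sum: "sum h S \<in> B" if "\<And>i. i \<in> S \<Longrightarrow> h i \<in> B" for h :: "_ \<Rightarrow> _" and S
    using that by (induction S rule: infinite_finite_induct) (auto intro: add const[of 0, simplified])
  have prod: "prod h S \<in> B" if "\<And>i. i \<in> S \<Longrightarrow> h i \<in> B" for h :: "_ \<Rightarrow> _" and S
    using that by (induction S rule: infinite_finite_induct) (auto intro: mult const[of 1, simplified])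
  have power: "a ^ n \<in> B" if "a \<in> B" for a n
    using that by (induction n) (auto intro: mult const[of 1, simplified])
  have "a \<in> B" for a
  proof -
    have "a = (\<Sum>\<alpha>\<in>Poly_Mapping.keys a. pconst (Poly_Mapping.lookup a \<alpha>) * pmonom \<alpha>)"
      by (subst poly_mapping_sum_single) (simp add: single_eq_pconst_mult_pmonom)
    also have "\<dots> \<in> B"
      using vars unfolding pmonom_def B_def[symmetric]
      by (intro sum mult const prod power) (auto simp: B_def)
    finally show ?thesis .
  qed
  then show ?thesis
    using T unfolding archimedean_preordering_def B_def by blast
qed

section \<open>Putinar's Positivstellensatz\<close>

definition ballpoly :: "real \<Rightarrow> 'v::finite rpoly" where
  "ballpoly N = pconst N - (\<Sum>i\<in>UNIV. pvar i * pvar i)"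

lemma is_preordering_sos: "is_preordering {p. is_sos p}"
  unfolding is_preordering_def by (simp add: is_sos_add is_sos_mult)

definition sos_preordering :: "'v rpoly \<Rightarrow> 'v rpoly set" where
  "sos_preordering h = preordering_adjoin {p. is_sos p} h"

lemma preordering_sos_preordering: "is_preordering (sos_preordering h)"
  unfolding sos_preordering_def by (rule preordering_preordering_adjoin[OF is_preordering_sos])

lemma self_mem_sos_preordering: "h \<in> sos_preordering h"
  unfolding sos_preordering_def by (rule mem_preordering_adjoin[OF is_preordering_sos])

lemma archimedean_sos_preordering_ballpoly:
  "archimedean_preordering (sos_preordering (ballpoly N :: 'v::finite rpoly))"
proof (rule archimedean_preorderingI[OF preordering_sos_preordering])
  fix i :: 'v
  let ?T = "sos_preordering (ballpoly N :: 'v rpoly)"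
  let ?R = "\<Sum>j\<in>UNIV - {i}. pvar j * pvar j :: 'v rpoly"
  define k where "k = (N + 1) / 2"
  have "2 * k = N + 1"
    by (simp add: k_def)
  then have two: "2 * pconst k = pconst N + (1 :: 'v rpoly)"
    by (metis pconst_mult pconst_numeral pconst_add pconst_1)
  have "pconst k + s * pvar i \<in> ?T" if s: "s * s = 1" for s :: "'v rpoly"
  proof -
    have "(\<Sum>j\<in>UNIV. pvar j * pvar j) = pvar i * pvar i + ?R"
      by (simp add: sum.remove[of UNIV i])
    then have "pconst N + 1 + 2 * (s * pvar i) = (?R + (pvar i + s) * (pvar i + s)) + ballpoly N * 1"
      using s by (simp add: ballpoly_def algebra_simps)
    then have "2 * (pconst k + s * pvar i) = (?R + (pvar i + s) * (pvar i + s)) + ballpoly N * 1"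
      by (simp add: distrib_left two)
    moreover have "is_sos (?R + (pvar i + s) * (pvar i + s))"
      by (intro is_sos_add is_sos_sum is_sos_square)
    ultimately have "2 * (pconst k + s * pvar i) \<in> ?T"
      unfolding sos_preordering_def preordering_adjoin_def using is_sos_1 by blast
    then show ?thesis
      by (rule preordering_half[OF preordering_sos_preordering])
  qed
  from this[of 1] this[of "- 1"]
  show "\<exists>k. pconst k - pvar i \<in> ?T \<and> pconst k + pvar i \<in> ?T"
    by auto
qed

lemma ballpoly_representation:
  fixes F :: "'v::finite rpoly"
  assumes "\<delta> > 0" and pos: "\<And>x. peval (ballpoly N) x \<ge> 0 \<Longrightarrow> peval F x > \<delta>"
  shows "\<exists>a b. is_sos a \<and> is_sos b \<and> F = a + b * ballpoly N"
proof -
  have "F \<in> sos_preordering (ballpoly N)"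
    by (rule archimedean_preordering_positivstellensatz[OF archimedean_sos_preordering_ballpoly
          self_mem_sos_preordering assms])
  then obtain a b where "is_sos a" "is_sos b" "F = a + ballpoly N * b"
    unfolding sos_preordering_def preordering_adjoin_def by blast
  then show ?thesis
    by (metis mult.commute)
qed

definition peval_vec :: "'v::finite rpoly \<Rightarrow> real ^ 'v \<Rightarrow> real" where
  "peval_vec p v = peval p (\<lambda>i. v $ i)"

lemma continuous_on_peval_vec: "continuous_on S (peval_vec p)"
  unfolding peval_vec_def peval_def meval_def by (intro continuous_intros)

lemma peval_vec_vec_lambda [simp]: "peval_vec p (\<chi> i. x i) = peval p x"
  by (simp add: peval_vec_def)

lemma compact_ballpoly_nonneg: "compact {v :: real ^ 'v::finite. peval_vec (ballpoly N) v \<ge> 0}"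
proof -
  let ?B = "{v :: real ^ 'v. peval_vec (ballpoly N) v \<ge> 0}"
  have "closed ?B"
    by (intro closed_Collect_le continuous_on_const continuous_on_peval_vec)
  moreover have "norm v \<le> sqrt N" if "v \<in> ?B" for v
  proof -
    have "(norm v)\<^sup>2 = (\<Sum>i\<in>UNIV. v $ i * v $ i)"
      by (simp add: dot_square_norm[symmetric] inner_vec_def)
    also have "\<dots> \<le> N"
      using that by (simp add: peval_vec_def ballpoly_def peval_diff peval_sum peval_mult)
    finally show ?thesis by (simp add: real_le_rsqrt)
  qed
  then have "bounded ?B"
    unfolding bounded_iff by blast
  ultimately show ?thesis
    by (simp add: compact_eq_bounded_closed)
qed

lemma ballpoly_uniform_bound:
  fixes p :: "'a \<Rightarrow> 'v::finite rpoly"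
  assumes "finite J"
  obtains L where "L \<ge> 1" "\<And>x j. peval (ballpoly N) x \<ge> 0 \<Longrightarrow> j \<in> J \<Longrightarrow> \<bar>peval (p j) x\<bar> \<le> L"
proof -
  let ?B = "{v :: real ^ 'v. peval_vec (ballpoly N) v \<ge> 0}"
  let ?\<psi> = "\<lambda>v. \<Sum>j\<in>J. \<bar>peval_vec (p j) v\<bar>"
  have "compact (?\<psi> ` ?B)"
    by (intro compact_continuous_image continuous_intros continuous_on_peval_vec
        compact_ballpoly_nonneg)
  then obtain b where "\<forall>y\<in>?\<psi> ` ?B. norm y \<le> b"
    by (meson bounded_pos compact_imp_bounded)
  then have b: "\<And>v. v \<in> ?B \<Longrightarrow> ?\<psi> v \<le> b"
    using abs_ge_self order_trans by fastforce
  show ?thesis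
  proof (rule that[of "max 1 b"])
    fix x :: "'v \<Rightarrow> real" and j assume "peval (ballpoly N) x \<ge> 0" "j \<in> J"
    have "\<bar>peval (p j) x\<bar> \<le> (\<Sum>j\<in>J. \<bar>peval (p j) x\<bar>)"
      using assms \<open>j \<in> J\<close> by (intro member_le_sum) auto
    also have "\<dots> \<le> b"
      using b[of "\<chi> i. x i"] \<open>peval (ballpoly N) x \<ge> 0\<close> by simp
    finally show "\<bar>peval (p j) x\<bar> \<le> max 1 b"
      by simp
  qed simp
qed

lemma sum_ge_imp_member_ge:
  fixes h :: "'a \<Rightarrow> real"
  assumes "finite S" "c > 0" "c \<le> sum h S"
  shows "\<exists>j\<in>S. c / card S \<le> h j"
proof (rule ccontr)
  assume "\<not> ?thesis"
  then have "S \<noteq> {}" "\<And>j. j \<in> S \<Longrightarrow> h j < c / card S"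
    using assms by auto
  then have "sum h S < (\<Sum>j\<in>S. c / card S)"
    using assms(1) by (intro sum_strict_mono)
  also have "\<dots> = c"
    using \<open>S \<noteq> {}\<close> assms(1) by simp
  finally show False using assms(3) by simp
qed

lemma ballpoly_positive_lower_bound:
  fixes \<psi> :: "real ^ 'v::finite \<Rightarrow> real"
  assumes "N \<ge> 0" and cont: "continuous_on {v. peval_vec (ballpoly N) v \<ge> 0} \<psi>"
    and pos: "\<And>v. peval_vec (ballpoly N) v \<ge> 0 \<Longrightarrow> \<psi> v > 0"
  obtains \<theta> where "\<theta> > 0" "\<And>v. peval_vec (ballpoly N) v \<ge> 0 \<Longrightarrow> \<theta> \<le> \<psi> v"
proof -
  have "peval_vec (ballpoly N) 0 \<ge> 0"
    using assms(1) by (simp add: peval_vec_def ballpoly_def peval_diff peval_sum peval_mult)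
  then obtain v0 where "peval_vec (ballpoly N) v0 \<ge> 0"
    "\<And>v. peval_vec (ballpoly N) v \<ge> 0 \<Longrightarrow> \<psi> v0 \<le> \<psi> v"
    using continuous_attains_inf[OF compact_ballpoly_nonneg _ cont] by blast
  then show ?thesis
    using that[of "\<psi> v0"] pos by blast
qed

lemma ballpoly_positive_margin:
  fixes f :: "'v::finite rpoly" and g :: "nat \<Rightarrow> 'v rpoly"
  assumes "N \<ge> 0" and pos: "\<And>x. (\<forall>j\<in>{1..m}. peval (g j) x \<ge> 0) \<Longrightarrow> peval f x > 0"
  obtains \<theta> where "\<theta> > 0"
    "\<And>x. peval (ballpoly N) x \<ge> 0 \<Longrightarrow> peval f x \<ge> \<theta> \<or> (\<exists>j\<in>{1..m}. peval (g j) x \<le> - \<theta>)"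
proof -
  define \<psi> where "\<psi> v = max (peval_vec f v) (\<Sum>j\<in>{1..m}. max 0 (- peval_vec (g j) v))" for v
  have "\<psi> v > 0" for v
  proof (cases "\<forall>j\<in>{1..m}. peval_vec (g j) v \<ge> 0")
    case True
    then show ?thesis
      using pos[of "\<lambda>i. v $ i"] by (simp add: \<psi>_def peval_vec_def)
  next
    case False
    then obtain j where j: "j \<in> {1..m}" "peval_vec (g j) v < 0" by auto
    then have "max 0 (- peval_vec (g j) v) \<le> (\<Sum>j\<in>{1..m}. max 0 (- peval_vec (g j) v))"
      by (intro member_le_sum) auto
    then show ?thesis
      using j unfolding \<psi>_def by linarith
  qed
  moreover have "continuous_on {v. peval_vec (ballpoly N) v \<ge> 0} \<psi>"
    unfolding \<psi>_def by (intro continuous_intros continuous_on_peval_vec)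
  ultimately obtain \<theta> where "\<theta> > 0" and \<theta>: "\<And>x. peval (ballpoly N) x \<ge> 0 \<Longrightarrow> \<theta> \<le> \<psi> (\<chi> i. x i)"
    using ballpoly_positive_lower_bound[OF assms(1)] by (metis peval_vec_vec_lambda)
  show ?thesis
  proof (rule that[of "\<theta> / (m + 1)"])
    show "\<theta> / (m + 1) > 0"
      using \<open>\<theta> > 0\<close> by simp
    fix x :: "'v \<Rightarrow> real" assume "peval (ballpoly N) x \<ge> 0"
    then consider "\<theta> \<le> peval f x" | "\<theta> \<le> (\<Sum>j\<in>{1..m}. max 0 (- peval (g j) x))"
      using \<theta> unfolding \<psi>_def by fastforce
    then show "peval f x \<ge> \<theta> / (m + 1) \<or> (\<exists>j\<in>{1..m}. peval (g j) x \<le> - (\<theta> / (m + 1)))"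
    proof cases
      case 1
      moreover have "\<theta> / (m + 1) \<le> \<theta> / 1"
        using \<open>\<theta> > 0\<close> by (intro divide_left_mono) auto
      ultimately show ?thesis by simp
    next
      case 2
      then obtain j where j: "j \<in> {1..m}" "\<theta> / m \<le> max 0 (- peval (g j) x)"
        using sum_ge_imp_member_ge[of "{1..m}" \<theta> "\<lambda>j. max 0 (- peval (g j) x)"] \<open>\<theta> > 0\<close> by auto
      moreover have "\<theta> / (m + 1) \<le> \<theta> / m"
        using \<open>\<theta> > 0\<close> j(1) by (intro divide_left_mono) auto
      moreover have "\<theta> / (m + 1) > 0"
        using \<open>\<theta> > 0\<close> by simp
      ultimately have "peval (g j) x \<le> - (\<theta> / (m + 1))"
        by (simp add: max_def split: if_splits)
      then show ?thesis
        using j(1) by blast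
    qed
  qed
qed

lemma one_minus_power_mult_le:
  fixes t :: real
  assumes "t \<le> 1" "n \<ge> 1"
  shows "(1 - t) ^ n * t \<le> 1 / n"
proof (cases "t \<ge> 0")
  case True
  have "(1 + n * t) * (1 - t) ^ n \<le> (1 + t) ^ n * (1 - t) ^ n"
    using True assms(1) by (intro mult_right_mono Bernoulli_inequality) auto
  also have "\<dots> = (1 - t * t) ^ n"
    by (simp add: power_mult_distrib[symmetric] algebra_simps)
  also have "\<dots> \<le> 1"
    using True assms(1) by (intro power_le_one) (auto simp: mult_le_one)
  finally have "(1 + n * t) * (1 - t) ^ n \<le> 1" .
  moreover have "(1 - t) ^ n \<ge> 0"
    using assms(1) by simp
  moreover have "n * ((1 - t) ^ n * t) = (1 + n * t) * (1 - t) ^ n - (1 - t) ^ n"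
    by (simp add: algebra_simps)
  ultimately have "n * ((1 - t) ^ n * t) \<le> 1"
    by linarith
  then show ?thesis
    using assms(2) by (simp add: field_simps mult.commute)
next
  case False
  then have "(1 - t) ^ n * t \<le> 0"
    by (simp add: mult_nonneg_nonpos)
  also have "0 \<le> 1 / real n" by simp
  finally show ?thesis .
qed

lemma one_minus_power_mult_le_neg:
  fixes t d :: real
  assumes "t \<le> - d" "d > 0"
  shows "(1 - t) ^ n * t \<le> - ((1 + d) ^ n * d)"
proof -
  have "(1 - t) ^ n * t \<le> (1 - t) ^ n * (- d)"
    using assms by (intro mult_left_mono) auto
  also have "\<dots> \<le> (1 + d) ^ n * (- d)"
    using assms by (intro mult_right_mono_neg power_mono) auto
  finally show ?thesis by simp
qed

lemma putinar_exponent_exists: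
  fixes m :: nat and \<theta> d L :: real
  assumes "\<theta> > 0" "d > 0"
  obtains k :: nat where "k \<ge> 1" "m \<le> k * \<theta>" "m + L \<le> (1 + d) ^ (2 * k) * d"
proof -
  define k :: nat where "k = nat \<lceil>m / \<theta> + \<bar>m + L\<bar> / d\<^sup>2\<rceil> + 1"
  have "m / \<theta> + \<bar>m + L\<bar> / d\<^sup>2 \<le> k"
    unfolding k_def by linarith
  moreover have "m / \<theta> \<ge> 0" "\<bar>m + L\<bar> / d\<^sup>2 \<ge> 0"
    using assms by simp_all
  ultimately have "m / \<theta> \<le> k" "\<bar>m + L\<bar> / d\<^sup>2 \<le> k"
    by linarith+
  then have km: "m \<le> k * \<theta>" and kd: "m + L \<le> k * d\<^sup>2"
    using assms by (simp_all add: field_simps)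
  have "k * d\<^sup>2 \<le> (1 + 2 * k * d) * d"
    using assms by (simp add: power2_eq_square algebra_simps)
  also have "\<dots> \<le> (1 + d) ^ (2 * k) * d"
    using Bernoulli_inequality[of d "2 * k"] assms by (intro mult_right_mono) auto
  finally show ?thesis
    using that[of k] km kd by (simp add: k_def)
qed

text \<open>Where \<open>y\<close> is at least \<open>\<theta>\<close> all correction terms are small, and where some \<open>z\<^sub>j \<le> -\<theta>\<close> that
  term alone outweighs \<open>y\<close> and all the others.\<close>
lemma putinar_correction_margin:
  fixes y L \<theta> :: real and z :: "nat \<Rightarrow> real"
  assumes L: "L \<ge> 1" "\<bar>y\<bar> \<le> L" "\<And>j. j \<in> {1..m} \<Longrightarrow> \<bar>z j\<bar> \<le> L"
    and \<theta>: "\<theta> > 0" "y \<ge> \<theta> \<or> (\<exists>j\<in>{1..m}. z j \<le> - \<theta>)"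
    and k: "k \<ge> 1" "m \<le> k * \<theta>" "m + L \<le> (1 + \<theta> / L) ^ (2 * k) * (\<theta> / L)"
  shows "y - (\<Sum>j=1..m. (1 - z j / L) ^ (2 * k) * (z j / L)) \<ge> min (\<theta> / 2) 1"
proof -
  let ?w = "\<lambda>j. (1 - z j / L) ^ (2 * k) * (z j / L)"
  have w_le: "?w j \<le> 1 / (2 * k)" if "j \<in> {1..m}" for j
    using one_minus_power_mult_le[of "z j / L" "2 * k"] L(1) L(3)[OF that] k(1)
    by (simp add: abs_le_iff)
  have w_le_1: "?w j \<le> 1" if "j \<in> {1..m}" for j
    using w_le[OF that] k(1) order_trans[of "?w j" "1 / (2 * k)" 1] by simp
  from \<theta>(2) show ?thesis
  proof
    assume "y \<ge> \<theta>"
    have "(\<Sum>j=1..m. ?w j) \<le> (\<Sum>j=1..m. 1 / (2 * k))"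
      by (intro sum_mono w_le)
    also have "\<dots> \<le> \<theta> / 2"
      using k(1,2) by (simp add: field_simps)
    finally show ?thesis
      using \<open>y \<ge> \<theta>\<close> by simp
  next
    assume "\<exists>j\<in>{1..m}. z j \<le> - \<theta>"
    then obtain j0 where j0: "j0 \<in> {1..m}" "z j0 \<le> - \<theta>"
      by blast
    have "z j0 / L \<le> - (\<theta> / L)"
      using divide_right_mono[OF j0(2), of L] L(1) by simp
    have "(\<Sum>j=1..m. ?w j) = ?w j0 + (\<Sum>j\<in>{1..m} - {j0}. ?w j)"
      using j0(1) by (simp add: sum.remove)
    also have "\<dots> \<le> - ((1 + \<theta> / L) ^ (2 * k) * (\<theta> / L)) + (\<Sum>j\<in>{1..m} - {j0}. 1)"
      using w_le_1 \<theta>(1) L(1) \<open>z j0 / L \<le> - (\<theta> / L)\<close>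
      by (intro add_mono one_minus_power_mult_le_neg sum_mono) auto
    also have "\<dots> \<le> - L - 1"
      using k(3) j0(1) by simp
    finally show ?thesis
      using L(2) min.cobounded2[of "\<theta> / 2" 1] abs_le_iff[of y L] by linarith
  qed
qed

definition putinar_weight :: "real \<Rightarrow> nat \<Rightarrow> 'v rpoly \<Rightarrow> 'v rpoly" where
  "putinar_weight c k p = pconst c * (1 - pconst c * p) ^ (2 * k)"

lemma is_sos_putinar_weight: "c \<ge> 0 \<Longrightarrow> is_sos (putinar_weight c k p)"
  unfolding putinar_weight_def by (intro is_sos_pconst_mult is_sos_even_power)

lemma putinar_corrected_positive:
  fixes f :: "'v::finite rpoly" and g :: "nat \<Rightarrow> 'v rpoly"
  assumes "N \<ge> 0" and pos: "\<And>x. (\<forall>j\<in>{1..m}. peval (g j) x \<ge> 0) \<Longrightarrow> peval f x > 0"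
  obtains c \<delta> k where "c \<ge> 0" "\<delta> > 0"
    "\<And>x. peval (ballpoly N) x \<ge> 0 \<Longrightarrow> peval (f - (\<Sum>j=1..m. putinar_weight c k (g j) * g j)) x > \<delta>"
proof -
  obtain \<theta> where "\<theta> > 0" and margin:
    "\<And>x. peval (ballpoly N) x \<ge> 0 \<Longrightarrow> peval f x \<ge> \<theta> \<or> (\<exists>j\<in>{1..m}. peval (g j) x \<le> - \<theta>)"
    using ballpoly_positive_margin[OF assms] by blast
  obtain L where "L \<ge> 1" and bound:
    "\<And>x j. peval (ballpoly N) x \<ge> 0 \<Longrightarrow> j \<in> {0..m} \<Longrightarrow> \<bar>peval (if j = 0 then f else g j) x\<bar> \<le> L"
    using ballpoly_uniform_bound[OF finite_atLeastAtMost, where N = N and p = "\<lambda>j. if j = 0 then f else g j"]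
    by blast
  obtain k where k: "k \<ge> 1" "m \<le> k * \<theta>" "m + L \<le> (1 + \<theta> / L) ^ (2 * k) * (\<theta> / L)"
    using putinar_exponent_exists[of \<theta> "\<theta> / L"] \<open>\<theta> > 0\<close> \<open>L \<ge> 1\<close> by auto
  show ?thesis
  proof (rule that[of "1 / L" "min (\<theta> / 2) 1 / 2" k])
    fix x :: "'v \<Rightarrow> real" assume "peval (ballpoly N) x \<ge> 0"
    then have "peval (f - (\<Sum>j=1..m. putinar_weight (1 / L) k (g j) * g j)) x \<ge> min (\<theta> / 2) 1"
      using putinar_correction_margin[of L "peval f x" m "\<lambda>j. peval (g j) x"] bound
        margin \<open>L \<ge> 1\<close> \<open>\<theta> > 0\<close> k
      by (fastforce simp: putinar_weight_def peval_diff peval_sum peval_mult peval_power)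
    then show "peval (f - (\<Sum>j=1..m. putinar_weight (1 / L) k (g j) * g j)) x > min (\<theta> / 2) 1 / 2"
      using \<open>\<theta> > 0\<close> by linarith
  qed (use \<open>L \<ge> 1\<close> \<open>\<theta> > 0\<close> in auto)
qed

theorem putinar_positivstellensatz:
  fixes g :: "nat \<Rightarrow> 'v::finite rpoly" and f :: "'v rpoly"
  assumes arch: "archimedean m g"
    and pos: "\<And>x. (\<forall>j\<in>{1..m}. peval (g j) x \<ge> 0) \<Longrightarrow> peval f x > 0"
  shows "\<exists>\<sigma>. (\<forall>j\<le>m. is_sos (\<sigma> j)) \<and> f = \<sigma> 0 + (\<Sum>j=1..m. \<sigma> j * g j)"
proof -
  obtain N \<tau> where "N > 0" and \<tau>: "\<forall>j\<le>m. is_sos (\<tau> j)"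
    and ball: "ballpoly N = \<tau> 0 + (\<Sum>j=1..m. \<tau> j * g j)"
    using arch unfolding archimedean_def quad_module_def ballpoly_def by blast
  obtain c \<delta> k where "c \<ge> 0" "\<delta> > 0" and F_pos:
    "\<And>x. peval (ballpoly N) x \<ge> 0 \<Longrightarrow> peval (f - (\<Sum>j=1..m. putinar_weight c k (g j) * g j)) x > \<delta>"
    by (rule putinar_corrected_positive[OF less_imp_le[OF \<open>N > 0\<close>] pos]) auto
  obtain a b where ab: "is_sos a" "is_sos b"
    and F: "f - (\<Sum>j=1..m. putinar_weight c k (g j) * g j) = a + b * ballpoly N"
    using ballpoly_representation[OF \<open>\<delta> > 0\<close> F_pos] by blast
  define \<sigma> where "\<sigma> j = (if j = 0 then a + b * \<tau> 0 else b * \<tau> j + putinar_weight c k (g j))" for j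
  have "\<forall>j\<le>m. is_sos (\<sigma> j)"
    using ab \<tau> \<open>c \<ge> 0\<close> unfolding \<sigma>_def by (auto intro!: is_sos_add is_sos_mult is_sos_putinar_weight)
  moreover have "f = \<sigma> 0 + (\<Sum>j=1..m. \<sigma> j * g j)"
  proof -
    have "f = a + b * ballpoly N + (\<Sum>j=1..m. putinar_weight c k (g j) * g j)"
      by (simp flip: F)
    also have "\<dots> = \<sigma> 0 + (\<Sum>j=1..m. \<sigma> j * g j)"
      unfolding ball by (simp add: \<sigma>_def algebra_simps sum.distrib sum_distrib_left)
    finally show ?thesis .
  qed
  ultimately show ?thesis by blast
qed

section \<open>Sign symmetries\<close>

definition sign_char :: "('v \<Rightarrow> nat) \<Rightarrow> ('v::finite \<Rightarrow>\<^sub>0 nat) \<Rightarrow> real" where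
  "sign_char s \<alpha> = (- 1) ^ (\<Sum>i\<in>UNIV. s i * Poly_Mapping.lookup \<alpha> i)"

text \<open>The substitution \<open>x\<^sub>i \<mapsto> (-1)\<^bsup>s\<^sub>i\<^esup> x\<^sub>i\<close>.\<close>
definition sign_flip :: "('v \<Rightarrow> nat) \<Rightarrow> 'v::finite rpoly \<Rightarrow> 'v rpoly" where
  "sign_flip s p = Poly_Mapping.mapp (\<lambda>\<alpha> c. sign_char s \<alpha> * c) p"

lemma sign_char_if:
  "sign_char s \<alpha> = (if even (\<Sum>i\<in>UNIV. s i * Poly_Mapping.lookup \<alpha> i) then 1 else - 1)"
  by (simp add: sign_char_def minus_one_power_iff)

lemma lookup_sign_flip: "Poly_Mapping.lookup (sign_flip s p) \<alpha> = sign_char s \<alpha> * Poly_Mapping.lookup p \<alpha>"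
  by (simp add: sign_flip_def lookup_mapp when_def in_keys_iff)

lemma sign_char_add: "sign_char s (\<alpha> + \<beta>) = sign_char s \<alpha> * sign_char s \<beta>"
  by (simp add: sign_char_def lookup_add distrib_left sum.distrib power_add)

lemma sign_flip_add: "sign_flip s (p + q) = sign_flip s p + sign_flip s q"
  by (rule poly_mapping_eqI) (simp add: lookup_sign_flip lookup_add algebra_simps)

lemma sign_flip_0: "sign_flip s 0 = 0"
  by (rule poly_mapping_eqI) (simp add: lookup_sign_flip)

lemma sign_flip_single: "sign_flip s (Poly_Mapping.single \<alpha> c) = Poly_Mapping.single \<alpha> (sign_char s \<alpha> * c)"
  by (rule poly_mapping_eqI) (simp add: lookup_sign_flip lookup_single when_def)

lemma sign_flip_mult: "sign_flip s (p * q) = sign_flip s p * sign_flip s q"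
  by (rule poly_mapping_mult_homI[where \<Phi> = "sign_flip s"])
    (simp_all add: sign_flip_add sign_flip_0 sign_flip_single mult_single sign_char_add mult_ac)

lemma sign_flip_sum: "sign_flip s (sum h S) = (\<Sum>i\<in>S. sign_flip s (h i))"
  by (induction S rule: infinite_finite_induct) (simp_all add: sign_flip_0 sign_flip_add)

lemma is_sos_sign_flip: "is_sos p \<Longrightarrow> is_sos (sign_flip s p)"
  by (rule is_sos_ring_hom[where \<Phi> = "sign_flip s"]) (simp_all add: sign_flip_add sign_flip_0 sign_flip_mult)

lemma sign_flip_eq_self:
  assumes "\<And>\<alpha>. \<alpha> \<in> supp p \<Longrightarrow> even (\<Sum>i\<in>UNIV. s i * Poly_Mapping.lookup \<alpha> i)"
  shows "sign_flip s p = p"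
proof (rule poly_mapping_eqI)
  fix \<alpha>
  show "Poly_Mapping.lookup (sign_flip s p) \<alpha> = Poly_Mapping.lookup p \<alpha>"
  proof (cases "Poly_Mapping.lookup p \<alpha> = 0")
    case False
    then have "even (\<Sum>i\<in>UNIV. s i * Poly_Mapping.lookup \<alpha> i)"
      using assms by (simp add: supp_def in_keys_iff)
    then show ?thesis
      by (simp add: lookup_sign_flip sign_char_if)
  qed (simp add: lookup_sign_flip)
qed

lemma sign_flip_eq_self_sign_symmetries:
  "s \<in> sign_symmetries A \<Longrightarrow> supp p \<subseteq> A \<Longrightarrow> sign_flip s p = p"
  by (rule sign_flip_eq_self) (auto simp: sign_symmetries_def)

definition sign_xor :: "('v \<Rightarrow> nat) \<Rightarrow> ('v \<Rightarrow> nat) \<Rightarrow> ('v \<Rightarrow> nat)" where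
  "sign_xor s t = (\<lambda>i. (s i + t i) mod 2)"

lemma sign_char_sign_xor: "sign_char (sign_xor s t) \<alpha> = sign_char s \<alpha> * sign_char t \<alpha>"
proof -
  let ?a = "Poly_Mapping.lookup \<alpha>"
  have "(\<Sum>i\<in>UNIV. sign_xor s t i * ?a i) mod 2 = (\<Sum>i\<in>UNIV. sign_xor s t i * ?a i mod 2) mod 2"
    by (rule mod_sum_eq[symmetric])
  also have "\<dots> = (\<Sum>i\<in>UNIV. (s i * ?a i + t i * ?a i) mod 2) mod 2"
    by (simp add: sign_xor_def mod_mult_left_eq distrib_right)
  also have "\<dots> = ((\<Sum>i\<in>UNIV. s i * ?a i) + (\<Sum>i\<in>UNIV. t i * ?a i)) mod 2"
    by (simp add: mod_sum_eq sum.distrib)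
  finally have "even (\<Sum>i\<in>UNIV. sign_xor s t i * ?a i) \<longleftrightarrow>
      even ((\<Sum>i\<in>UNIV. s i * ?a i) + (\<Sum>i\<in>UNIV. t i * ?a i))"
    by (simp add: even_iff_mod_2_eq_zero)
  then show ?thesis
    by (simp add: sign_char_def minus_one_power_iff[of "_ + _"] flip: power_add)
qed

lemma sign_xor_mem_sign_symmetries:
  assumes "s \<in> sign_symmetries A" "t \<in> sign_symmetries A"
  shows "sign_xor s t \<in> sign_symmetries A"
proof -
  have "sign_xor s t i \<in> {0, 1}" for i
    by (auto simp: sign_xor_def)
  moreover have "even (\<Sum>i\<in>UNIV. sign_xor s t i * Poly_Mapping.lookup \<alpha> i)" if "\<alpha> \<in> A" for \<alpha>
  proof -
    have "sign_char s \<alpha> = 1" "sign_char t \<alpha> = 1"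
      using assms that by (simp_all add: sign_symmetries_def sign_char_if)
    then have "sign_char (sign_xor s t) \<alpha> = 1"
      by (simp add: sign_char_sign_xor)
    then show ?thesis
      by (simp add: sign_char_if split: if_splits)
  qed
  ultimately show ?thesis
    by (simp add: sign_symmetries_def)
qed

lemma sign_xor_sign_xor:
  assumes "\<forall>i. s i \<in> {0, 1}" "\<forall>i. t i \<in> {0, 1}"
  shows "sign_xor t (sign_xor t s) = s"
proof
  fix i
  show "sign_xor t (sign_xor t s) i = s i"
    using assms[THEN spec[of _ i]] by (auto simp: sign_xor_def)
qed

lemma finite_sign_symmetries: "finite (sign_symmetries (A :: ('v::finite \<Rightarrow>\<^sub>0 nat) set))"
proof (rule finite_subset)
  show "sign_symmetries A \<subseteq> {f. \<forall>x. (x \<in> UNIV \<longrightarrow> f x \<in> {0, 1}) \<and> (x \<notin> UNIV \<longrightarrow> f x = 0)}"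
    unfolding sign_symmetries_def by auto
  show "finite {f. \<forall>x::'v. (x \<in> UNIV \<longrightarrow> f x \<in> {0::nat, 1}) \<and> (x \<notin> UNIV \<longrightarrow> f x = 0)}"
    by (rule finite_set_of_finite_funs) auto
qed

lemma zero_mem_sign_symmetries: "(\<lambda>_. 0) \<in> sign_symmetries A"
  unfolding sign_symmetries_def by simp

text \<open>Orthogonality of characters: translating the group by \<open>t\<close> negates the sum.\<close>
lemma sum_sign_char_eq_0:
  assumes t: "t \<in> sign_symmetries A" and odd: "odd (\<Sum>i\<in>UNIV. t i * Poly_Mapping.lookup \<alpha> i)"
  shows "(\<Sum>s\<in>sign_symmetries A. sign_char s \<alpha>) = 0"
proof -
  let ?R = "sign_symmetries A"
  have "bij_betw (sign_xor t) ?R ?R"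
  proof (rule bij_betwI[where g = "sign_xor t"])
    show "sign_xor t \<in> ?R \<rightarrow> ?R" "sign_xor t \<in> ?R \<rightarrow> ?R"
      using sign_xor_mem_sign_symmetries[OF t] by auto
    fix s assume "s \<in> ?R"
    then have "\<forall>i. s i \<in> {0, 1}" "\<forall>i. t i \<in> {0, 1}"
      using t unfolding sign_symmetries_def by blast+
    then show "sign_xor t (sign_xor t s) = s" "sign_xor t (sign_xor t s) = s"
      by (simp_all add: sign_xor_sign_xor)
  qed
  then have "(\<Sum>s\<in>?R. sign_char s \<alpha>) = (\<Sum>s\<in>?R. sign_char (sign_xor t s) \<alpha>)"
    by (rule sum.reindex_bij_betw[symmetric])
  also have "\<dots> = - (\<Sum>s\<in>?R. sign_char s \<alpha>)"
    using odd by (simp add: sign_char_sign_xor sign_char_if[of t] sum_negf)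
  finally show ?thesis by simp
qed

definition sign_avg :: "('v \<Rightarrow> nat) set \<Rightarrow> 'v::finite rpoly \<Rightarrow> 'v rpoly" where
  "sign_avg R p = pconst (1 / card R) * (\<Sum>s\<in>R. sign_flip s p)"

lemma is_sos_sign_avg: "is_sos p \<Longrightarrow> is_sos (sign_avg R p)"
  unfolding sign_avg_def by (intro is_sos_pconst_mult is_sos_sum is_sos_sign_flip) auto

lemma sign_avg_add: "sign_avg R (p + q) = sign_avg R p + sign_avg R q"
  by (simp add: sign_avg_def sign_flip_add sum.distrib distrib_left)

lemma sign_avg_sum: "sign_avg R (sum h S) = (\<Sum>j\<in>S. sign_avg R (h j))"
  by (simp add: sign_avg_def sign_flip_sum sum_distrib_left sum.swap[of _ R])

lemma sign_avg_mult_invariant: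
  "(\<And>s. s \<in> R \<Longrightarrow> sign_flip s q = q) \<Longrightarrow> sign_avg R (p * q) = sign_avg R p * q"
  by (simp add: sign_avg_def sign_flip_mult sum_distrib_right mult.assoc)

lemma sign_avg_invariant:
  assumes "finite R" "R \<noteq> {}" "\<And>s. s \<in> R \<Longrightarrow> sign_flip s p = p"
  shows "sign_avg R p = p"
proof -
  have "sign_avg R p = pconst (1 / card R) * (pconst (card R) * p)"
    using assms(3) by (simp add: sign_avg_def pconst_of_nat)
  also have "\<dots> = p"
    using assms(1,2) by (simp add: pconst_inverse_mult_cancel)
  finally show ?thesis .
qed

lemma supp_sign_avg_sign_symmetries:
  assumes "\<alpha> \<in> supp (sign_avg (sign_symmetries A) p)" "s \<in> sign_symmetries A"
  shows "even (\<Sum>i\<in>UNIV. s i * Poly_Mapping.lookup \<alpha> i)"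
proof (rule ccontr)
  assume "odd (\<Sum>i\<in>UNIV. s i * Poly_Mapping.lookup \<alpha> i)"
  then have "Poly_Mapping.lookup (sign_avg (sign_symmetries A) p) \<alpha> = 0"
    using sum_sign_char_eq_0[OF assms(2)]
    by (simp add: sign_avg_def lookup_pconst_mult lookup_sum lookup_sign_flip flip: sum_distrib_right)
  then show False
    using assms(1) by (simp add: supp_def in_keys_iff)
qed

theorem theorem7p6:
  fixes m :: nat and g :: "nat \<Rightarrow> 'v::finite rpoly" and f :: "'v rpoly"
    and R :: "('v \<Rightarrow> nat) set"
  assumes arch: "archimedean m g"
    and pos: "\<And>x. (\<forall>j\<in>{1..m}. peval (g j) x \<ge> 0) \<Longrightarrow> peval f x > 0"
    and R: "R = sign_symmetries (supp f \<union> (\<Union>j\<in>{1..m}. supp (g j)))"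
  shows "\<exists>\<sigma> :: nat \<Rightarrow> 'v rpoly.
           (\<forall>j\<le>m. is_sos (\<sigma> j)) \<and>
           f = \<sigma> 0 + (\<Sum>j=1..m. \<sigma> j * g j) \<and>
           (\<forall>j\<le>m. \<forall>\<alpha>\<in>supp (\<sigma> j). \<forall>s\<in>R. even (\<Sum>i\<in>UNIV. s i * Poly_Mapping.lookup \<alpha> i))"
proof -
  obtain \<sigma> where sos: "\<forall>j\<le>m. is_sos (\<sigma> j)" and f: "f = \<sigma> 0 + (\<Sum>j=1..m. \<sigma> j * g j)"
    using putinar_positivstellensatz[OF arch pos] by blast
  have f_inv: "sign_flip s f = f" and g_inv: "\<And>j. j \<in> {1..m} \<Longrightarrow> sign_flip s (g j) = g j"
    if "s \<in> R" for s
    using that unfolding R by (auto intro: sign_flip_eq_self_sign_symmetries)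
  have "f = sign_avg R f"
    using R finite_sign_symmetries zero_mem_sign_symmetries f_inv
    by (intro sign_avg_invariant[symmetric]) auto
  also have "\<dots> = sign_avg R (\<sigma> 0) + (\<Sum>j=1..m. sign_avg R (\<sigma> j) * g j)"
    by (subst f) (simp add: sign_avg_add sign_avg_sum sign_avg_mult_invariant g_inv)
  finally have "f = sign_avg R (\<sigma> 0) + (\<Sum>j=1..m. sign_avg R (\<sigma> j) * g j)" .
  then show ?thesis
    using sos R by (intro exI[of _ "\<lambda>j. sign_avg R (\<sigma> j)"])
      (auto intro: is_sos_sign_avg supp_sign_avg_sign_symmetries)
qed

end
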